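(* Let $\mathcal M=\mathcal M_4$ and $n\ge1$. Then $m_{\mathrm{opt}}(n)<4b(n)\le 4\log_2(n+1)$.
   Context: Let $\mathbf X=\{X_1,\dots,X_n\}$ with the uniform measure. For $1\le m\le n$ let $\mathcal X_m$ be the set of finite sequences $\chi=(\chi_1,\dots,\chi_\ell)$ in $\mathbf X$ with exactly $m$ distinct entries and with $\chi_\ell$ different from all earlier entries; $\ell(\chi)$ is the length, $\chi$ has weight $n^{-\ell(\chi)}$, and $E_m[f]=\sum_{\chi\in\mathcal X_m}f(\chi)n^{-\ell(\chi)}$. Let $t_j(\chi)$ be the least $t\ge 0$ with $|\{\chi_1,\dots,\chi_t\}|=j$ ($0\le j\le m$) and $\tau_j(\chi)=t_{j+1}(\chi)-t_j(\chi)-1$ for $1\le j\le m-1$. Let $b(j)=(1+\frac1j)\log_2(j+1)-1$. In model $\mathcal M_4$ (complete memory, numbered shelves) the average total cost is $F(m)=2m\,b(n)\,E_m[1/\ell]+\sum_{j=1}^{m-1}E_m[\tau_j/\ell]\,\frac{j+1}{2}$, and $m_{\mathrm{opt}}(n)$ is the smallest $m\in\{1,\dots,n\}$ minimizing $F(m)$. *)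

theory Defs
  imports "HOL-Analysis.Analysis"
begin

text \<open>The alphabet X = {X_1,...,X_n} is represented by {0..<n}; sequences are lists.\<close>

definition seqs :: "nat \<Rightarrow> nat \<Rightarrow> nat list set" where
  "seqs n m = {xs. set xs \<subseteq> {..<n} \<and> card (set xs) = m \<and> xs \<noteq> [] \<and>
                   last xs \<notin> set (butlast xs)}"

definition Em :: "nat \<Rightarrow> nat \<Rightarrow> (nat list \<Rightarrow> real) \<Rightarrow> real" where
  "Em n m f = (\<Sum>\<^sub>\<infinity>xs\<in>seqs n m. f xs * (1 / real n) ^ length xs)"

definition tt :: "nat \<Rightarrow> nat list \<Rightarrow> nat" where
  "tt j xs = (LEAST t. card (set (take t xs)) = j)"

definition tau :: "nat \<Rightarrow> nat list \<Rightarrow> real" where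
  "tau j xs = real (tt (j+1) xs) - real (tt j xs) - 1"

definition b :: "nat \<Rightarrow> real" where
  "b j = (1 + 1 / real j) * log 2 (real j + 1) - 1"

definition F :: "nat \<Rightarrow> nat \<Rightarrow> real" where
  "F n m = 2 * real m * b n * Em n m (\<lambda>xs. 1 / real (length xs))
         + (\<Sum>j=1..m-1. Em n m (\<lambda>xs. tau j xs / real (length xs)) * (real j + 1) / 2)"

definition m_opt :: "nat \<Rightarrow> nat" where
  "m_opt n = (LEAST m. m \<in> {1..n} \<and> (\<forall>k\<in>{1..n}. F n m \<le> F n k))"

end

theory Submission
  imports Defs
begin

text \<open>
  \<open>F m\<close> is the expectation, over the sequences \<open>\<chi>\<close> of \<open>\<X>\<^sub>m\<close> weighted by \<open>n ^ -\<ell>(\<chi>)\<close>,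
  of the cost rate \<open>(2 m b(n) + \<Sum>\<^bsub>j<m\<^esub> \<tau>\<^sub>j (j+1)/2) / \<ell>(\<chi>)\<close>. Cutting \<open>\<chi>\<close> just after the first
  occurrence of its \<open>k\<close>-th distinct letter maps the weight on \<open>\<X>\<^sub>m\<close> onto the weight on \<open>\<X>\<^sub>k\<close>,
  because each step \<open>\<X>\<^sub>j \<rightarrow> \<X>\<^bsub>j+1\<^esub>\<close> appends a word over the \<open>j\<close> letters already seen and then a
  fresh letter, and these extensions have total weight one (a geometric waiting time).
  Now take \<open>k = \<lceil>4 b(n)\<rceil> - 1\<close>. In the prefix every waiting time \<open>\<tau>\<^sub>j\<close> is charged
  \<open>(j+1)/2 \<le> 2 b(n)\<close> per step, so its cost rate is at most \<open>2 b(n)\<close>; in the discarded part every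
  step is charged at least \<open>2 b(n)\<close>. The cost rate of \<open>\<chi>\<close> is a mediant of the two, hence at least
  that of its prefix, and integrating gives \<open>F k \<le> F m\<close> for every \<open>m \<ge> k\<close>. So the least
  minimiser is at most \<open>k < 4 b(n)\<close>.
\<close>

abbreviation weight :: "nat \<Rightarrow> nat list \<Rightarrow> real" where
  "weight n xs \<equiv> (1 / real n) ^ length xs"

section \<open>First occurrence times\<close>

lemma card_set_take_mono: "t \<le> t' \<Longrightarrow> card (set (take t xs)) \<le> card (set (take t' xs))"
  by (intro card_mono) (auto simp: set_take_subset_set_take)

lemma ex_take_card_eq:
  assumes "j \<le> card (set xs)"
  shows "\<exists>t\<le>length xs. card (set (take t xs)) = j"
  using assms
proof (induction xs arbitrary: j rule: rev_induct)
  case (snoc x xs)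
  show ?case
  proof (cases "j \<le> card (set xs)")
    case True
    then obtain t where "t \<le> length xs" "card (set (take t xs)) = j" using snoc.IH by blast
    then show ?thesis by (intro exI[of _ t]) auto
  next
    case False
    then have "j = card (set (xs @ [x]))"
      using snoc.prems by (simp add: card_insert_if split: if_splits)
    then show ?thesis by (intro exI[of _ "length (xs @ [x])"]) auto
  qed
qed simp

lemma tt_le: "card (set (take t xs)) = j \<Longrightarrow> tt j xs \<le> t"
  unfolding tt_def by (rule Least_le)

lemma tt_eqI:
  assumes "card (set (take t xs)) = j" "\<And>t'. t' < t \<Longrightarrow> card (set (take t' xs)) < j"
  shows "tt j xs = t"
  unfolding tt_def
proof (rule Least_equality)
  fix y assume "card (set (take y xs)) = j"
  then show "t \<le> y" using assms(2)[of y] by (cases "y < t") auto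
qed fact

lemma
  assumes "j \<le> card (set xs)"
  shows card_set_take_tt: "card (set (take (tt j xs) xs)) = j"
    and tt_le_length: "tt j xs \<le> length xs"
proof -
  obtain t where t: "t \<le> length xs" "card (set (take t xs)) = j"
    using ex_take_card_eq[OF assms] by blast
  show "card (set (take (tt j xs) xs)) = j"
    unfolding tt_def by (rule LeastI[of _ t]) (fact t(2))
  show "tt j xs \<le> length xs" using tt_le[OF t(2)] t(1) by simp
qed

lemma card_set_take_less_tt: "t < tt j xs \<Longrightarrow> card (set (take t xs)) \<noteq> j"
  unfolding tt_def by (rule not_less_Least)

lemma tt_strict_mono:
  assumes "j < j'" "j' \<le> card (set xs)"
  shows "tt j xs < tt j' xs"
proof -
  have c: "card (set (take (tt j' xs) xs)) = j'" using card_set_take_tt[OF assms(2)] .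
  obtain t where t: "t \<le> length (take (tt j' xs) xs)" "card (set (take t (take (tt j' xs) xs))) = j"
    using ex_take_card_eq[of j "take (tt j' xs) xs"] c assms by auto
  have "card (set (take t xs)) = j" using t by (simp add: min_def split: if_splits)
  then have "tt j xs \<le> t" by (rule tt_le)
  then have "tt j xs \<le> tt j' xs" using t(1) by simp
  moreover have "tt j xs \<noteq> tt j' xs" using card_set_take_tt[of j xs] c assms by auto
  ultimately show ?thesis by simp
qed

lemma tt_take:
  assumes "i \<le> card (set (take T xs))"
  shows "tt i (take T xs) = tt i xs"
proof -
  obtain t where t: "t \<le> T" "card (set (take t xs)) = i"
    using ex_take_card_eq[OF assms] by (auto simp: min_def split: if_splits)
  have L: "card (set (take (tt i xs) xs)) = i" "tt i xs \<le> t"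
    using card_set_take_tt[of i xs] tt_le[OF t(2)] assms
      card_mono[OF finite_set set_take_subset[of T xs]] by simp_all
  show ?thesis
  proof (rule tt_eqI)
    show "card (set (take (tt i xs) (take T xs))) = i" using L t by (simp add: min_def)
    fix t' assume "t' < tt i xs"
    then have "card (set (take t' xs)) < i"
      using card_set_take_less_tt[of t' i xs] card_set_take_mono[of t' "tt i xs" xs] L by simp
    moreover have "card (set (take (min t' T) xs)) \<le> card (set (take t' xs))"
      by (rule card_set_take_mono) simp
    ultimately show "card (set (take t' (take T xs))) < i" unfolding take_take by linarith
  qed
qed

lemma tt_1: "xs \<noteq> [] \<Longrightarrow> tt 1 xs = 1"
  by (rule tt_eqI) (auto simp: neq_Nil_conv)

lemma tau_nonneg: "j < card (set xs) \<Longrightarrow> 0 \<le> tau j xs"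
  using tt_strict_mono[of j "Suc j" xs] by (simp add: tau_def)

lemma tau_le_length: "j < card (set xs) \<Longrightarrow> tau j xs \<le> real (length xs)"
  using tt_le_length[of "Suc j" xs] by (simp add: tau_def)

lemma tt_eq_sum_tau:
  assumes "xs \<noteq> []" "1 \<le> k" "k \<le> card (set xs)"
  shows "real (tt k xs) = real k + (\<Sum>j=1..<k. tau j xs)"
  using assms(2,3)
proof (induction k rule: dec_induct)
  case base then show ?case using tt_1[OF assms(1)] by simp
next
  case (step k) then show ?case by (simp add: tau_def)
qed

lemma seqsD:
  assumes "xs \<in> seqs n m"
  shows "xs \<noteq> []" "set xs \<subseteq> {..<n}" "card (set xs) = m" "last xs \<notin> set (butlast xs)"
    "card (set (butlast xs)) = m - 1" "1 \<le> m"
proof -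
  show ne: "xs \<noteq> []" and "set xs \<subseteq> {..<n}" and c: "card (set xs) = m"
    and nl: "last xs \<notin> set (butlast xs)" using assms by (auto simp: seqs_def)
  have "set xs = insert (last xs) (set (butlast xs))"
    by (subst append_butlast_last_id[OF ne, symmetric]) auto
  then have "card (set xs) = Suc (card (set (butlast xs)))" using nl by simp
  then show "card (set (butlast xs)) = m - 1" "1 \<le> m" using c by auto
qed

lemma tt_card_seqs: "xs \<in> seqs n m \<Longrightarrow> tt m xs = length xs"
proof (rule tt_eqI)
  assume xs: "xs \<in> seqs n m"
  show "card (set (take (length xs) xs)) = m" using seqsD[OF xs] by simp
  fix t' assume "t' < length xs"
  then have "set (take t' xs) \<subseteq> set (butlast xs)" by (metis take_butlast set_take_subset)
  then have "card (set (take t' xs)) \<le> m - 1"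
    using seqsD(5)[OF xs] card_mono[of "set (butlast xs)"] by fastforce
  then show "card (set (take t' xs)) < m" using seqsD(6)[OF xs] by simp
qed

lemma take_tt_in_seqs:
  assumes "1 \<le> k" "k \<le> card (set xs)" "set xs \<subseteq> {..<n}"
  shows "take (tt k xs) xs \<in> seqs n k"
proof -
  define T where "T = tt k xs"
  have c: "card (set (take T xs)) = k" and TL: "T \<le> length xs"
    using card_set_take_tt[OF assms(2)] tt_le_length[OF assms(2)] by (simp_all add: T_def)
  have T1: "1 \<le> T" using c assms(1) by (cases T) auto
  have e: "take T xs = take (T - 1) xs @ [xs ! (T - 1)]"
    using T1 TL by (metis Suc_diff_1 Suc_le_lessD less_le_trans take_Suc_conv_app_nth zero_less_one)
  have "card (set (take (T - 1) xs)) \<noteq> k"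
    using card_set_take_less_tt[of "T - 1" k xs] T1 by (simp add: T_def)
  then have fresh: "xs ! (T - 1) \<notin> set (take (T - 1) xs)"
    using c by (subst (asm) e) (auto simp: insert_absorb)
  have "last (take T xs) = xs ! (T - 1)" "butlast (take T xs) = take (T - 1) xs"
    by (subst e, simp)+
  then show ?thesis unfolding seqs_def T_def[symmetric]
    using fresh c e assms(3) set_take_subset[of T xs] by auto
qed

lemma append_fresh_in_seqs:
  assumes "xs \<in> seqs n m" "set r \<subseteq> set xs" "y < n" "y \<notin> set xs"
  shows "xs @ r @ [y] \<in> seqs n (Suc m)" "tt m (xs @ r @ [y]) = length xs"
proof -
  note xs = seqsD[OF assms(1)]
  have "set (xs @ r @ [y]) = insert y (set xs)" using assms(2) by auto
  then show "xs @ r @ [y] \<in> seqs n (Suc m)"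
    using xs assms(2-4) by (auto simp: seqs_def butlast_append)
  show "tt m (xs @ r @ [y]) = length xs"
  proof (rule tt_eqI)
    show "card (set (take (length xs) (xs @ r @ [y]))) = m" using xs by simp
    fix t' assume "t' < length xs"
    then have "set (take t' (xs @ r @ [y])) \<subseteq> set (butlast xs)"
      by (metis take_append take_butlast diff_is_0_eq' less_imp_le take_0 append_Nil2 set_take_subset)
    then have "card (set (take t' (xs @ r @ [y]))) \<le> m - 1"
      using xs(5) card_mono[of "set (butlast xs)"] by fastforce
    then show "card (set (take t' (xs @ r @ [y]))) < m" using xs(6) by simp
  qed
qed

text \<open>With \<open>append_fresh_in_seqs\<close>: \<open>(p, r, y) \<mapsto> p @ r @ [y]\<close> is a bijection from the triples with
  \<open>p \<in> seqs n m\<close>, \<open>set r \<subseteq> set p\<close>, \<open>y < n\<close>, \<open>y \<notin> set p\<close> onto \<open>seqs n (Suc m)\<close>, inverted by cutting at \<open>tt m\<close>.\<close>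

lemma seqs_Suc_split:
  assumes "xs \<in> seqs n (Suc m)" "1 \<le> m"
  defines "T \<equiv> tt m xs"
  shows "take T xs \<in> seqs n m" "set (drop T (butlast xs)) \<subseteq> set (take T xs)"
    "last xs \<notin> set (take T xs)" "last xs < n" "take T xs @ drop T (butlast xs) @ [last xs] = xs"
proof -
  note xs = seqsD[OF assms(1)]
  have cb: "card (set (butlast xs)) = m" using xs by simp
  have "tt m (butlast xs) \<le> length (butlast xs)" using tt_le_length[of m "butlast xs"] cb by simp
  then have "take (tt m (butlast xs)) (butlast xs) = take (tt m (butlast xs)) xs"
    by (metis butlast_conv_take min.absorb1 take_take length_butlast)
  then have "tt m xs \<le> tt m (butlast xs)"
    using card_set_take_tt[of m "butlast xs"] cb by (metis tt_le order.refl)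
  then have TL: "T \<le> length (butlast xs)" using tt_le_length[of m "butlast xs"] cb T_def by simp
  then have tb: "take T xs = take T (butlast xs)"
    by (metis butlast_conv_take min.absorb1 take_take length_butlast)
  show "take T xs \<in> seqs n m" unfolding T_def using take_tt_in_seqs[of m xs n] xs assms(2) by simp
  have "card (set (take T xs)) = m" unfolding T_def using card_set_take_tt[of m xs] xs by simp
  then have eq: "set (take T xs) = set (butlast xs)"
    using tb cb by (simp add: card_subset_eq set_take_subset)
  show "set (drop T (butlast xs)) \<subseteq> set (take T xs)" using eq set_drop_subset by metis
  show "last xs \<notin> set (take T xs)" using eq xs by simp
  show "last xs < n" using xs(1,2) by (meson last_in_set lessThan_iff subsetD)
  show "take T xs @ drop T (butlast xs) @ [last xs] = xs" using tb xs(1)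
    by (metis append_assoc append_butlast_last_id append_take_drop_id)
qed

lemma seqs_1: "seqs n 1 = (\<lambda>x. [x]) ` {..<n}"
proof
  show "seqs n 1 \<subseteq> (\<lambda>x. [x]) ` {..<n}"
  proof
    fix xs assume xs: "xs \<in> seqs n 1"
    have "butlast xs = []" using seqsD(5)[OF xs] by simp
    then have "xs = [last xs]" using seqsD(1)[OF xs] by (metis append_butlast_last_id append_Nil)
    moreover have "last xs < n" using seqsD(1,2)[OF xs] by (meson last_in_set lessThan_iff subsetD)
    ultimately show "xs \<in> (\<lambda>x. [x]) ` {..<n}" by blast
  qed
qed (auto simp: seqs_def)

section \<open>The weight of \<open>seqs\<close> and its marginals\<close>

lemma has_sum_Sigma_nonneg:
  fixes f :: "'a \<times> 'b \<Rightarrow> real"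
  assumes "\<And>x. x \<in> A \<Longrightarrow> ((\<lambda>y. f (x, y)) has_sum g x) (B x)" "(g has_sum S) A"
    "\<And>x y. x \<in> A \<Longrightarrow> y \<in> B x \<Longrightarrow> 0 \<le> f (x, y)"
  shows "(f has_sum S) (Sigma A B)"
  using assms by (intro has_sum_SigmaI summable_on_SigmaI) (auto dest: has_sum_imp_summable)

lemma has_sum_sum:
  fixes f :: "'j \<Rightarrow> 'a \<Rightarrow> real"
  assumes "finite J" "\<And>j. j \<in> J \<Longrightarrow> (f j has_sum s j) A"
  shows "((\<lambda>x. \<Sum>j\<in>J. f j x) has_sum (\<Sum>j\<in>J. s j)) A"
  using assms by (induction J rule: finite_induct) (auto intro: has_sum_add)

lemma has_sum_geometric_waiting:
  assumes "m < n"
  shows "((\<lambda>t. real m ^ t * (real n - real m) * (1 / real n) ^ (t + 1)) has_sum 1) UNIV"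
proof -
  have "(\<lambda>t. (real m / real n) ^ t * ((real n - real m) / real n)) sums
        (1 / (1 - real m / real n) * ((real n - real m) / real n))"
    by (rule sums_mult2[OF geometric_sums]) (use assms in simp)
  also have "1 / (1 - real m / real n) * ((real n - real m) / real n) = 1"
    using assms by (simp add: field_simps)
  finally have "((\<lambda>t. (real m / real n) ^ t * ((real n - real m) / real n)) has_sum 1) UNIV"
    by (rule sums_nonneg_imp_has_sum) (use assms in auto)
  then show ?thesis by (simp add: field_simps)
qed

text \<open>The words \<open>r\<close> over an \<open>m\<close>-letter set \<open>S\<close> followed by a letter \<open>y \<notin> S\<close>: grouping by
  \<open>t = length r\<close> gives the geometric distribution of the waiting time.\<close>

lemma has_sum_words_then_fresh:
  assumes "finite S" "card S = m" "m < n" "S \<subseteq> {..<n}"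
  shows "((\<lambda>(r, y). (1 / real n) ^ (length r + 1)) has_sum 1)
           (Sigma {r. set r \<subseteq> S} (\<lambda>_. {..<n} - S))"
proof -
  define q where "q = 1 / real n"
  have fresh: "((\<lambda>y. q ^ (length r + 1)) has_sum ((real n - real m) * q ^ (length r + 1)))
      ({..<n} - S)" for r :: "nat list"
    by (rule has_sum_finiteI) (use assms in \<open>auto simp: card_Diff_subset\<close>)
  have "((\<lambda>r. (real n - real m) * q ^ (length r + 1)) has_sum
          (real m ^ t * (real n - real m) * q ^ (t + 1))) {r. set r \<subseteq> S \<and> length r = t}" for t
    using card_lists_length_eq[OF assms(1), of t] finite_lists_length_eq[OF assms(1), of t] assms(2)
    by (intro has_sum_finiteI) (simp_all add: sum.cong[of _ _ _ "\<lambda>_. (real n - real m) * q ^ (t + 1)"])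
  then have "((\<lambda>(t, r). (real n - real m) * q ^ (length r + 1)) has_sum 1)
             (Sigma UNIV (\<lambda>t. {r. set r \<subseteq> S \<and> length r = t}))"
    using assms(3) q_def
    by (intro has_sum_Sigma_nonneg[OF _ has_sum_geometric_waiting[OF assms(3)]]) auto
  then have words: "((\<lambda>r. (real n - real m) * q ^ (length r + 1)) has_sum 1) {r. set r \<subseteq> S}"
    by (subst has_sum_reindex_bij_witness[where j = "\<lambda>r. (length r, r)" and i = snd
          and T = "Sigma UNIV (\<lambda>t. {r. set r \<subseteq> S \<and> length r = t})"
          and h = "\<lambda>(t, r). (real n - real m) * q ^ (length r + 1)"]) auto
  show ?thesis unfolding q_def[symmetric]
    by (rule has_sum_Sigma_nonneg[OF _ words]) (use fresh q_def in auto)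
qed

lemma has_sum_prefix_seqs_Suc:
  assumes "1 \<le> m" "m < n" "\<And>p. p \<in> seqs n m \<Longrightarrow> 0 \<le> g p"
    and "((\<lambda>p. g p * weight n p) has_sum S) (seqs n m)"
  shows "((\<lambda>xs. g (take (tt m xs) xs) * weight n xs) has_sum S) (seqs n (Suc m))"
proof -
  define Ext where "Ext p = Sigma {r. set r \<subseteq> set p} (\<lambda>_. {..<n} - set p)" for p :: "nat list"
  define f where "f = (\<lambda>(p, r :: nat list, y :: nat). g p * weight n (p @ r @ [y]))"
  have "((\<lambda>z. f (p, z)) has_sum (g p * weight n p)) (Ext p)" if p: "p \<in> seqs n m" for p
  proof -
    have "((\<lambda>(r, y). (1 / real n) ^ (length r + 1)) has_sum 1) (Ext p)"
      unfolding Ext_def by (rule has_sum_words_then_fresh) (use seqsD[OF p] assms(2) in auto)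
    from has_sum_cmult_right[OF this, of "g p * weight n p"]
    show ?thesis unfolding f_def by (simp add: case_prod_beta power_add mult.assoc)
  qed
  then have sum_f: "(f has_sum S) (Sigma (seqs n m) Ext)"
    by (rule has_sum_Sigma_nonneg[OF _ assms(4)]) (use assms(3) in \<open>auto simp: f_def case_prod_beta\<close>)
  show ?thesis
  proof (subst has_sum_reindex_bij_witness[where T = "Sigma (seqs n m) Ext" and h = f
        and j = "\<lambda>xs. (take (tt m xs) xs, drop (tt m xs) (butlast xs), last xs)"
        and i = "\<lambda>(p, r, y). p @ r @ [y]"])
    fix xs assume "xs \<in> seqs n (Suc m)"
    note split = seqs_Suc_split[OF this assms(1)]
    show "(case (take (tt m xs) xs, drop (tt m xs) (butlast xs), last xs) of
        (p, r, y) \<Rightarrow> p @ r @ [y]) = xs" using split(5) by simp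
    show "(take (tt m xs) xs, drop (tt m xs) (butlast xs), last xs) \<in> Sigma (seqs n m) Ext"
      unfolding Ext_def using split(1-4) by auto
    show "f (take (tt m xs) xs, drop (tt m xs) (butlast xs), last xs) =
        g (take (tt m xs) xs) * weight n xs"
      by (simp only: f_def prod.case split(5))
  next
    fix z assume "z \<in> Sigma (seqs n m) Ext"
    then obtain p r y where z: "z = (p, r, y)" "p \<in> seqs n m" "set r \<subseteq> set p" "y < n" "y \<notin> set p"
      unfolding Ext_def by auto
    note app = append_fresh_in_seqs[OF z(2-5)]
    show "(\<lambda>(p, r, y). p @ r @ [y]) z \<in> seqs n (Suc m)" using app z by simp
    show "(take (tt m ((\<lambda>(p, r, y). p @ r @ [y]) z)) ((\<lambda>(p, r, y). p @ r @ [y]) z),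
           drop (tt m ((\<lambda>(p, r, y). p @ r @ [y]) z)) (butlast ((\<lambda>(p, r, y). p @ r @ [y]) z)),
           last ((\<lambda>(p, r, y). p @ r @ [y]) z)) = z"
      using app(2) z by (simp add: butlast_append)
  qed (use sum_f in simp_all)
qed

lemma has_sum_weight_seqs:
  assumes "1 \<le> m" "m \<le> n"
  shows "(weight n has_sum 1) (seqs n m)"
  using assms
proof (induction m rule: dec_induct)
  case base
  have "((\<lambda>x. weight n [x]) has_sum 1) {..<n}"
    by (rule has_sum_finiteI) (use assms in auto)
  then show ?case unfolding seqs_1 by (subst has_sum_reindex) (auto simp: inj_on_def o_def)
next
  case (step m)
  from has_sum_prefix_seqs_Suc[of m n "\<lambda>_. 1" 1] step show ?case by simp
qed

lemma take_tt_take_tt: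
  assumes "k \<le> m" "m \<le> card (set xs)"
  shows "take (tt k (take (tt m xs) xs)) (take (tt m xs) xs) = take (tt k xs) xs"
proof -
  have "tt k (take (tt m xs) xs) = tt k xs"
    using card_set_take_tt[OF assms(2)] assms(1) by (intro tt_take) simp
  moreover have "tt k xs \<le> tt m xs"
    using tt_strict_mono[of k m xs] assms by (cases "k = m") auto
  ultimately show ?thesis by (simp add: min_def)
qed

lemma has_sum_prefix_seqs:
  assumes "1 \<le> k" "k \<le> m" "m \<le> n" "\<And>p. p \<in> seqs n k \<Longrightarrow> 0 \<le> g p"
    and "((\<lambda>p. g p * weight n p) has_sum S) (seqs n k)"
  shows "((\<lambda>xs. g (take (tt k xs) xs) * weight n xs) has_sum S) (seqs n m)"
  using assms(2,3)
proof (induction m rule: dec_induct)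
  case base
  show ?case using assms(5) by (rule has_sum_cong[THEN iffD1, rotated]) (simp add: tt_card_seqs)
next
  case (step m)
  have "0 \<le> g (take (tt k p) p)" if "p \<in> seqs n m" for p
    using seqsD[OF that] step.hyps assms(1) by (intro assms(4) take_tt_in_seqs) auto
  moreover have "((\<lambda>xs. g (take (tt k xs) xs) * weight n xs) has_sum S) (seqs n m)"
    using step by simp
  ultimately have "((\<lambda>xs. g (take (tt k (take (tt m xs) xs)) (take (tt m xs) xs)) * weight n xs)
      has_sum S) (seqs n (Suc m))"
    using step assms(1) by (intro has_sum_prefix_seqs_Suc) auto
  moreover have "g (take (tt k (take (tt m xs) xs)) (take (tt m xs) xs)) * weight n xs =
      g (take (tt k xs) xs) * weight n xs" if "xs \<in> seqs n (Suc m)" for xs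
    using seqsD(3)[OF that] step.hyps(1) by (subst take_tt_take_tt) auto
  ultimately show ?case by (rule has_sum_cong[THEN iffD1, rotated])
qed

section \<open>The cost as an expectation\<close>

definition cost_rate :: "nat \<Rightarrow> nat \<Rightarrow> nat list \<Rightarrow> real" where
  "cost_rate n m xs = (2 * real m * b n + (\<Sum>j=1..<m. tau j xs * (real j + 1) / 2)) / real (length xs)"

lemma summable_on_seqs_bounded:
  assumes "1 \<le> m" "m \<le> n" "\<And>p. p \<in> seqs n m \<Longrightarrow> \<bar>f p\<bar> \<le> 1"
  shows "(\<lambda>p. f p * weight n p) summable_on seqs n m"
proof -
  have "(\<lambda>p. norm (f p * weight n p)) summable_on seqs n m"
  proof (rule summable_on_comparison_test)
    show "weight n summable_on seqs n m"
      using has_sum_weight_seqs[OF assms(1,2)] by (rule has_sum_imp_summable)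
    show "norm (f p * weight n p) \<le> weight n p" if "p \<in> seqs n m" for p
      using assms(3)[OF that] by (simp add: abs_mult mult_left_le_one_le)
  qed simp
  then show ?thesis using summable_on_iff_abs_summable_on_real by blast
qed

lemma has_sum_cost_rate:
  assumes "1 \<le> m" "m \<le> n"
  shows "((\<lambda>p. cost_rate n m p * weight n p) has_sum F n m) (seqs n m)"
proof -
  have len: "1 \<le> real (length p)" if "p \<in> seqs n m" for p
    using seqsD(1)[OF that] by (cases p) auto
  have "(\<lambda>p. 1 / real (length p) * weight n p) summable_on seqs n m"
    using len by (intro summable_on_seqs_bounded[OF assms]) (simp add: divide_le_eq_1)
  then have main: "((\<lambda>p. 2 * real m * b n * (1 / real (length p) * weight n p)) has_sum
             (2 * real m * b n * Em n m (\<lambda>xs. 1 / real (length xs)))) (seqs n m)"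
    unfolding Em_def by (rule has_sum_cmult_right[OF has_sum_infsum])
  have waits: "((\<lambda>p. tau j p / real (length p) * weight n p * (real j + 1) / 2) has_sum
             (Em n m (\<lambda>xs. tau j xs / real (length xs)) * (real j + 1) / 2)) (seqs n m)"
    if j: "j \<in> {1..<m}" for j
  proof -
    have "\<bar>tau j p / real (length p)\<bar> \<le> 1" if p: "p \<in> seqs n m" for p
      using tau_nonneg[of j p] tau_le_length[of j p] seqsD(3)[OF p] len[OF p] j
      by (simp add: divide_le_eq_1)
    then have "(\<lambda>p. tau j p / real (length p) * weight n p) summable_on seqs n m"
      by (rule summable_on_seqs_bounded[OF assms])
    from has_sum_divide_const[OF has_sum_cmult_left[OF has_sum_infsum[OF this]], of "real j + 1" 2]
    show ?thesis unfolding Em_def by simp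
  qed
  have "{1..m - 1} = {1..<m}" using assms(1) by auto
  then have F_eq: "F n m = 2 * real m * b n * Em n m (\<lambda>xs. 1 / real (length xs)) +
      (\<Sum>j=1..<m. Em n m (\<lambda>xs. tau j xs / real (length xs)) * (real j + 1) / 2)"
    unfolding F_def by simp
  have integrand: "2 * real m * b n * (1 / real (length p) * weight n p) +
      (\<Sum>j=1..<m. tau j p / real (length p) * weight n p * (real j + 1) / 2) =
      cost_rate n m p * weight n p" for p
  proof -
    have "(\<Sum>j=1..<m. tau j p / real (length p) * weight n p * (real j + 1) / 2) =
        (\<Sum>j=1..<m. tau j p * (real j + 1) / 2) * (weight n p / real (length p))"
      unfolding sum_distrib_right by (rule sum.cong) (simp_all add: ac_simps)
    then show ?thesis by (simp add: cost_rate_def add_divide_distrib distrib_right)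
  qed
  have "((\<lambda>p. 2 * real m * b n * (1 / real (length p) * weight n p) +
      (\<Sum>j=1..<m. tau j p / real (length p) * weight n p * (real j + 1) / 2)) has_sum F n m)
      (seqs n m)"
    unfolding F_eq by (intro has_sum_add main has_sum_sum finite_atLeastLessThan waits)
  then show ?thesis unfolding integrand .
qed

section \<open>Truncation lowers the cost rate\<close>

lemma ratio_le_mediant:
  fixes x y u v c :: real
  assumes "0 < y" "0 \<le> v" "x \<le> c * y" "c * v \<le> u"
  shows "x / y \<le> (x + u) / (y + v)"
proof -
  have "x * v \<le> c * y * v" using assms by (intro mult_right_mono) auto
  also have "\<dots> \<le> u * y" using assms by (metis mult.commute mult.left_commute mult_left_mono less_imp_le)
  finally show ?thesis using assms by (simp add: field_simps)
qed

lemma cost_rate_take_tt_le: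
  assumes p: "p \<in> seqs n m" and "1 \<le> k" "k \<le> m"
    and "real k < 4 * b n" "4 * b n \<le> real k + 1"
  shows "cost_rate n k (take (tt k p) p) \<le> cost_rate n m p"
proof -
  define q where "q = take (tt k p) p"
  define c where "c = 2 * b n"
  define w where "w = (\<lambda>j. tau j p * (real j + 1) / 2)"
  define A where "A = (\<Sum>j=1..<k. tau j p)"
  define A' where "A' = (\<Sum>j=k..<m. tau j p)"
  note P = seqsD[OF p]
  have tau_nonneg': "0 \<le> tau j p" if "j < m" for j
    using tau_nonneg[of j p] that P by simp
  have cq: "card (set q) = k" unfolding q_def using card_set_take_tt[of k p] P assms by simp
  have tau_q: "tau j q = tau j p" if "j \<in> {1..<k}" for j
    using that cq unfolding tau_def by (simp add: tt_take q_def)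
  have len_q: "real (length q) = real k + A"
    using tt_eq_sum_tau[OF P(1) assms(2)] tt_le_length[of k p] P assms by (simp add: q_def A_def)
  have len_p: "real (length p) = (real k + A) + (real (m - k) + A')"
    using tt_eq_sum_tau[OF P(1) P(6)] tt_card_seqs[OF p] assms
      sum.atLeastLessThan_concat[of 1 k m "\<lambda>j. tau j p"] by (simp add: A_def A'_def P(3))
  have cost_q: "cost_rate n k q = (c * real k + (\<Sum>j=1..<k. w j)) / (real k + A)"
    unfolding cost_rate_def len_q c_def w_def using tau_q by simp
  have cost_p: "cost_rate n m p = ((c * real k + (\<Sum>j=1..<k. w j)) + (c * real (m - k) + (\<Sum>j=k..<m. w j)))
      / ((real k + A) + (real (m - k) + A'))"
    unfolding cost_rate_def len_p c_def
    using sum.atLeastLessThan_concat[of 1 k m w] assms by (simp add: w_def algebra_simps)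
  have "(\<Sum>j=1..<k. w j) \<le> (\<Sum>j=1..<k. c * tau j p)"
  proof (rule sum_mono)
    fix j assume j: "j \<in> {1..<k}"
    then have "(real j + 1) / 2 \<le> c" using assms(4) by (simp add: c_def)
    from mult_left_mono[OF this tau_nonneg'] j assms(3) show "w j \<le> c * tau j p"
      by (simp add: w_def mult.commute)
  qed
  moreover have "(\<Sum>j=k..<m. c * tau j p) \<le> (\<Sum>j=k..<m. w j)"
  proof (rule sum_mono)
    fix j assume j: "j \<in> {k..<m}"
    then have "c \<le> (real j + 1) / 2" using assms(5) by (simp add: c_def)
    from mult_left_mono[OF this tau_nonneg'] j show "c * tau j p \<le> w j"
      by (simp add: w_def mult.commute)
  qed
  moreover have "0 \<le> A" "0 \<le> A'"
    using tau_nonneg' assms unfolding A_def A'_def by (auto intro!: sum_nonneg)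
  ultimately show ?thesis unfolding q_def[symmetric] cost_q cost_p
    using assms(2) by (intro ratio_le_mediant[where c = c])
      (auto simp: A_def A'_def sum_distrib_left algebra_simps)
qed

lemma cost_rate_nonneg:
  assumes "xs \<in> seqs n m" "0 \<le> b n"
  shows "0 \<le> cost_rate n m xs"
proof -
  have "0 \<le> tau j xs" if "j \<in> {1..<m}" for j
    using tau_nonneg[of j xs] seqsD(3)[OF assms(1)] that by simp
  then show ?thesis
    unfolding cost_rate_def using assms(2) by (intro divide_nonneg_nonneg add_nonneg_nonneg sum_nonneg) auto
qed

lemma F_threshold_le_F:
  assumes "1 \<le> k" "k \<le> m" "m \<le> n" "real k < 4 * b n" "4 * b n \<le> real k + 1"
  shows "F n k \<le> F n m"
proof (rule has_sum_mono)
  have "0 \<le> b n" using assms(1,4) by simp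
  with assms show "((\<lambda>xs. cost_rate n k (take (tt k xs) xs) * weight n xs) has_sum F n k) (seqs n m)"
    by (intro has_sum_prefix_seqs has_sum_cost_rate cost_rate_nonneg) auto
  show "((\<lambda>p. cost_rate n m p * weight n p) has_sum F n m) (seqs n m)"
    using assms(1-3) by (intro has_sum_cost_rate) auto
  show "cost_rate n k (take (tt k p) p) * weight n p \<le> cost_rate n m p * weight n p"
    if "p \<in> seqs n m" for p
    using cost_rate_take_tt_le[OF that assms(1,2,4,5)] by (intro mult_right_mono) auto
qed

lemma b_le_log:
  assumes "1 \<le> n"
  shows "b n \<le> log 2 (real n + 1)"
proof -
  have "Suc n \<le> 2 ^ n"
    using assms by (induction n rule: dec_induct) auto
  then have "log 2 (real n + 1) \<le> real n"
    using log2_of_power_le[of "Suc n" n] by (simp add: add.commute)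
  then show ?thesis using assms by (simp add: b_def field_simps)
qed

lemma b_gt_quarter:
  assumes "1 \<le> n"
  shows "1 < 4 * b n"
proof -
  define L where "L = log 2 (real n + 1)"
  have bL: "b n = L + L / real n - 1" unfolding b_def L_def using assms by (simp add: field_simps)
  consider "n = 1" | "n = 2" | "3 \<le> n" using assms by linarith
  then show ?thesis
  proof cases
    case 2
    then have "1 < L" unfolding L_def using less_log_iff[of 2 3 1] by simp
    then show ?thesis using bL 2 by simp
  next
    case 3
    then have "2 \<le> L" unfolding L_def using le_log_of_power[of 2 2 "real n + 1"] by simp
    moreover have "0 \<le> L / real n" using \<open>2 \<le> L\<close> by simp
    ultimately show ?thesis using bL by linarith
  qed (simp add: b_def)
qed

lemma m_opt_least_minimiser:
  assumes "1 \<le> n"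
  shows "m_opt n \<in> {1..n}" "\<And>k. k \<in> {1..n} \<Longrightarrow> F n (m_opt n) \<le> F n k"
    and "\<And>m. m \<in> {1..n} \<Longrightarrow> \<forall>k\<in>{1..n}. F n m \<le> F n k \<Longrightarrow> m_opt n \<le> m"
proof -
  obtain m where "m \<in> {1..n}" "\<forall>k\<in>{1..n}. F n m \<le> F n k"
    using ex_is_arg_min_if_finite[of "{1..n}" "F n"] assms
    by (auto simp: is_arg_min_def not_less)
  then have "m_opt n \<in> {1..n} \<and> (\<forall>k\<in>{1..n}. F n (m_opt n) \<le> F n k)"
    unfolding m_opt_def by (rule LeastI[of _ m, OF conjI])
  then show "m_opt n \<in> {1..n}" "\<And>k. k \<in> {1..n} \<Longrightarrow> F n (m_opt n) \<le> F n k" by auto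
  show "m_opt n \<le> m'" if "m' \<in> {1..n}" "\<forall>k\<in>{1..n}. F n m' \<le> F n k" for m'
    unfolding m_opt_def using that by (intro Least_le) auto
qed

theorem proposition2:
  fixes n :: nat
  assumes "n \<ge> 1"
  shows "real (m_opt n) < 4 * b n \<and> 4 * b n \<le> 4 * log 2 (real n + 1)"
proof -
  define k where "k = nat (\<lceil>4 * b n\<rceil> - 1)"
  have "1 \<le> \<lceil>4 * b n\<rceil> - 1" using b_gt_quarter[OF assms] by linarith
  then have "real k = of_int \<lceil>4 * b n\<rceil> - 1" unfolding k_def by simp
  then have k: "1 \<le> k" "real k < 4 * b n" "4 * b n \<le> real k + 1"
    using b_gt_quarter[OF assms] ceiling_correct[of "4 * b n"] by linarith+
  have "m_opt n \<le> k"
  proof (rule ccontr)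
    assume "\<not> m_opt n \<le> k"
    then have "k \<in> {1..n}" "F n k \<le> F n (m_opt n)"
      using m_opt_least_minimiser(1)[OF assms] k by (auto intro: F_threshold_le_F)
    then have "m_opt n \<le> k"
      using m_opt_least_minimiser(2,3)[OF assms] by (meson order_trans)
    with \<open>\<not> m_opt n \<le> k\<close> show False ..
  qed
  then show ?thesis using k(2) b_le_log[OF assms] by linarith
qed

end
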